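(* Let $c$ be constant. Then for all integers $a\ge b\ge0$, $$F(z^a\bar z^b)=(mc-a)b\,z^{a-1}\bar z^{b-1}-mc\sum_{1\le k\le(a-b)/m}(-1)^{mk}(a-b-mk)\,z^{a-mk-1}\bar z^{b+mk-1}.$$
   Context: Let $m\ge2$, $\zeta=e^{2\pi i/m}$, and let $z,\bar z$ be independent variables. For $j=0,\dots,m-1$ let $s_j$ be the algebra automorphism of $\mathbb C[z,\bar z]$ with $s_j(z)=-\zeta^j\bar z$, $s_j(\bar z)=-\zeta^{-j}z$. For a constant $c\in\mathbb C$ define Dunkl operators $Y(q)=\frac{\partial q}{\partial z}-c\sum_{j=0}^{m-1}\frac{q-s_j(q)}{z+\zeta^j\bar z}$ and $\bar Y(q)=\frac{\partial q}{\partial\bar z}-c\sum_{j=0}^{m-1}\frac{q-s_j(q)}{\bar z+\zeta^{-j}z}$ (they commute), and $F=-Y\bar Y$. (A term with a negative exponent has coefficient zero.) *)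

theory Defs
  imports Complex_Main "HOL-Computational_Algebra.Polynomial"
begin

text \<open>Bivariate polynomials C[z, zb] are modelled as nested polynomials
  complex poly poly: the outer variable is zb, coefficients are polynomials in z.\<close>

type_synonym bipoly = "complex poly poly"

definition Zv :: bipoly where "Zv = [:[:0, 1:]:]"
definition Zbv :: bipoly where "Zbv = [:0, 1:]"
definition cst :: "complex \<Rightarrow> bipoly" where "cst x = [:[:x:]:]"

definition eval2 :: "bipoly \<Rightarrow> bipoly \<Rightarrow> bipoly \<Rightarrow> bipoly" where
  "eval2 q X Y = poly (map_poly (\<lambda>p. poly (map_poly cst p) X) q) Y"

definition dz :: "bipoly \<Rightarrow> bipoly" where "dz q = map_poly pderiv q"
definition dzb :: "bipoly \<Rightarrow> bipoly" where "dzb q = pderiv q"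

definition zeta :: "nat \<Rightarrow> complex" where "zeta m = cis (2 * pi / real m)"

definition refl_s :: "nat \<Rightarrow> nat \<Rightarrow> bipoly \<Rightarrow> bipoly" where
  "refl_s m j q = eval2 q (cst (- (zeta m ^ j)) * Zbv) (cst (- (inverse (zeta m) ^ j)) * Zv)"

definition dunklY :: "nat \<Rightarrow> complex \<Rightarrow> bipoly \<Rightarrow> bipoly" where
  "dunklY m c q = dz q - cst c * (\<Sum>j<m. (q - refl_s m j q) div (Zv + cst (zeta m ^ j) * Zbv))"

definition dunklYb :: "nat \<Rightarrow> complex \<Rightarrow> bipoly \<Rightarrow> bipoly" where
  "dunklYb m c q = dzb q - cst c * (\<Sum>j<m. (q - refl_s m j q) div (Zbv + cst (inverse (zeta m) ^ j) * Zv))"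

definition dunklF :: "nat \<Rightarrow> complex \<Rightarrow> bipoly \<Rightarrow> bipoly" where
  "dunklF m c q = - dunklY m c (dunklYb m c q)"

end

theory Submission
  imports Defs
begin

text \<open>Write D_j = z + zeta^j zb for the mirror form of s_j. For every j,
  z^m - (-zb)^m = D_j E_j with E_j = sum_i z^(m-1-i) (-zeta^j zb)^i, so multiplying the
  Dunkl operators by this common polynomial turns their divided differences (q - s_j q) / D_j
  into sum_j zeta^(j e) E_j (q - s_j q), with e = 0 for Y and e = 1 for Ybar. On a monomial,
  orthogonality of the characters j -> zeta^(j k) leaves only two terms of this sum, and
  dividing the resulting binomial by z^m - (-zb)^m is a geometric series. This gives
  Ybar (z^a zb^b) = b z^a zb^(b-1) + c m P with an alternating sum P of monomials, and
  Y (z^a zb^(b-1)) as a similar sum over k <= N = (a - b) div m. The divided differences of Y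
  annihilate P, because the binomials produced by the k-th and the (N+1-k)-th terms of P
  cancel.\<close>

lemma cst_0 [simp]: "cst 0 = 0"
  by (simp add: cst_def)

lemma cst_1 [simp]: "cst 1 = 1"
  by (simp add: cst_def one_pCons)

lemma cst_add: "cst (x + y) = cst x + cst y"
  by (simp add: cst_def)

lemma cst_mult: "cst (x * y) = cst x * cst y"
  by (simp add: cst_def)

lemma cst_uminus: "cst (- x) = - cst x"
  by (simp add: cst_def)

lemma cst_diff: "cst (x - y) = cst x - cst y"
  by (simp add: cst_def)

lemma cst_power: "cst (x ^ n) = cst x ^ n"
  by (induct n) (simp_all add: cst_mult)

lemma cst_sum: "cst (sum f A) = (\<Sum>a\<in>A. cst (f a))"
  by (induct A rule: infinite_finite_induct) (simp_all add: cst_add)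

lemma cst_mult_eq_smult: "cst g * q = smult [:g:] q"
  by (simp add: cst_def)

definition bimonom :: "complex \<Rightarrow> nat \<Rightarrow> nat \<Rightarrow> bipoly" where
  "bimonom g a b = cst g * Zv ^ a * Zbv ^ b"

lemma bimonom_eq_monom: "bimonom g a b = monom (monom g a) b"
proof -
  have "Zv ^ a = [:monom 1 a:]"
    unfolding Zv_def by (induct a) (simp_all add: monom_Suc mult.commute)
  moreover have "Zbv ^ b = monom 1 b"
    unfolding Zbv_def by (simp add: monom_altdef)
  ultimately show ?thesis
    by (simp add: bimonom_def cst_def smult_monom monom_altdef)
qed

lemma bimonom_0 [simp]: "bimonom 0 a b = 0"
  by (simp add: bimonom_def)

lemma bimonom_mult: "bimonom g a b * bimonom h a' b' = bimonom (g * h) (a + a') (b + b')"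
  by (simp add: bimonom_def cst_mult power_add algebra_simps)

lemma cst_mult_bimonom: "cst h * bimonom g a b = bimonom (h * g) a b"
  by (simp add: bimonom_def cst_mult algebra_simps)

lemma bimonom_add: "bimonom g a b + bimonom h a b = bimonom (g + h) a b"
  by (simp add: bimonom_def cst_add algebra_simps)

lemma bimonom_diff: "bimonom g a b - bimonom h a b = bimonom (g - h) a b"
  by (simp add: bimonom_def cst_diff algebra_simps)

lemma bimonom_uminus: "- bimonom g a b = bimonom (- g) a b"
  by (simp add: bimonom_def cst_uminus)

lemma sum_bimonom: "(\<Sum>k\<in>A. bimonom (f k) a b) = bimonom (sum f A) a b"
  by (simp add: bimonom_def cst_sum sum_distrib_right)

lemma bipoly_eq_sum_bimonom:
  "q = (\<Sum>i\<le>degree q. \<Sum>k\<le>degree (coeff q i). bimonom (coeff (coeff q i) k) k i)"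
proof -
  have "q = (\<Sum>i\<le>degree q. monom (coeff q i) i)"
    by (simp only: poly_as_sum_of_monoms)
  also have "\<dots> = (\<Sum>i\<le>degree q. monom (\<Sum>k\<le>degree (coeff q i). monom (coeff (coeff q i) k) k) i)"
    by (simp only: poly_as_sum_of_monoms)
  finally show ?thesis
    by (simp only: monom_sum bimonom_eq_monom)
qed

lemma bipoly_induct [case_names zero add bimonom]:
  assumes "P 0" and "\<And>p q. P p \<Longrightarrow> P q \<Longrightarrow> P (p + q)" and "\<And>g a b. P (bimonom g a b)"
  shows "P q"
proof -
  have sum: "P (sum f A)" if "\<And>x. P (f x)" for f :: "nat \<Rightarrow> bipoly" and A
    using that by (induct A rule: infinite_finite_induct) (simp_all add: assms(1,2))
  have "P (\<Sum>i\<le>degree q. \<Sum>k\<le>degree (coeff q i). bimonom (coeff (coeff q i) k) k i)"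
    by (intro sum assms(3))
  then show ?thesis
    by (simp only: bipoly_eq_sum_bimonom [of q, symmetric])
qed

lemma map_poly_add:
  assumes "f 0 = 0" and "\<And>x y. f (x + y) = f x + f y"
  shows "map_poly f (p + q) = map_poly f p + map_poly f q"
  by (intro poly_eqI) (simp add: coeff_map_poly assms)

lemma eval2_0 [simp]: "eval2 0 X Y = 0"
  by (simp add: eval2_def)

lemma eval2_add: "eval2 (p + q) X Y = eval2 p X Y + eval2 q X Y"
proof -
  have "map_poly cst (u + v) = map_poly cst u + map_poly cst v" for u v
    by (rule map_poly_add) (simp_all add: cst_add)
  then have "map_poly (\<lambda>u. poly (map_poly cst u) X) (p + q)
      = map_poly (\<lambda>u. poly (map_poly cst u) X) p + map_poly (\<lambda>u. poly (map_poly cst u) X) q"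
    by (intro map_poly_add) simp_all
  then show ?thesis
    by (simp add: eval2_def)
qed

lemma eval2_sum: "eval2 (sum f A) X Y = (\<Sum>a\<in>A. eval2 (f a) X Y)"
  by (induct A rule: infinite_finite_induct) (simp_all add: eval2_add)

lemma eval2_cst_mult: "eval2 (cst g * q) X Y = cst g * eval2 q X Y"
proof -
  have "poly (map_poly cst (smult g u)) X = cst g * poly (map_poly cst u) X" for u
    by (simp add: map_poly_smult cst_mult)
  then have "map_poly (\<lambda>u. poly (map_poly cst u) X) (smult [:g:] q)
      = smult (cst g) (map_poly (\<lambda>u. poly (map_poly cst u) X) q)"
    by (intro poly_eqI) (simp add: coeff_map_poly)
  then show ?thesis
    by (simp add: eval2_def cst_mult_eq_smult)
qed

lemma eval2_bimonom: "eval2 (bimonom g a b) X Y = cst g * X ^ a * Y ^ b"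
  by (simp add: bimonom_eq_monom eval2_def map_poly_monom poly_monom)

lemma refl_s_zero [simp]: "refl_s m j 0 = 0"
  by (simp add: refl_s_def)

lemma refl_s_add: "refl_s m j (p + q) = refl_s m j p + refl_s m j q"
  by (simp add: refl_s_def eval2_add)

lemma refl_s_sum: "refl_s m j (sum f A) = (\<Sum>a\<in>A. refl_s m j (f a))"
  by (simp add: refl_s_def eval2_sum)

lemma refl_s_cst_mult: "refl_s m j (cst g * q) = cst g * refl_s m j q"
  by (simp add: refl_s_def eval2_cst_mult)

lemma refl_s_bimonom:
  "refl_s m j (bimonom g a b) = bimonom (g * (- (zeta m ^ j)) ^ a * (- (inverse (zeta m) ^ j)) ^ b) b a"
  unfolding refl_s_def eval2_bimonom
  by (simp add: bimonom_def power_mult_distrib cst_mult cst_power algebra_simps)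

lemma dz_add: "dz (p + q) = dz p + dz q"
  unfolding dz_def by (intro poly_eqI) (simp add: coeff_map_poly pderiv_add)

lemma dz_0 [simp]: "dz 0 = 0"
  by (simp add: dz_def)

lemma dz_sum: "dz (sum f A) = (\<Sum>a\<in>A. dz (f a))"
  by (induct A rule: infinite_finite_induct) (simp_all add: dz_add)

lemma dz_cst_mult: "dz (cst g * q) = cst g * dz q"
  unfolding dz_def cst_mult_eq_smult by (intro poly_eqI) (simp add: coeff_map_poly pderiv_smult)

lemma dz_bimonom: "dz (bimonom g a b) = bimonom (of_nat a * g) (a - 1) b"
  by (simp add: dz_def bimonom_eq_monom map_poly_monom pderiv_monom)

lemma dzb_bimonom: "dzb (bimonom g a b) = bimonom (of_nat b * g) a (b - 1)"
  by (simp add: dzb_def bimonom_eq_monom pderiv_monom of_nat_monom mult_monom)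

lemma zeta_power: "zeta m ^ k = cis (2 * pi * real k / real m)"
  by (simp add: zeta_def DeMoivre mult.commute)

lemma zeta_nonzero [simp]: "zeta m \<noteq> 0"
  by (simp add: zeta_def)

lemma zeta_power_m: "0 < m \<Longrightarrow> zeta m ^ m = 1"
  by (simp add: zeta_power)

lemma zeta_power_add_mult: "0 < m \<Longrightarrow> zeta m ^ (k + m * t) = zeta m ^ k"
  by (simp add: power_add power_mult zeta_power_m)

lemma zeta_power_cancel:
  assumes "0 < m" and "i < m" and "i' < m"
  shows "zeta m ^ (e + i) = zeta m ^ (e + i') \<longleftrightarrow> i = i'"
proof -
  have "inj_on (\<lambda>k. zeta m ^ k) {..<m}"
    using bij_betw_roots_unity [OF assms(1)] by (simp add: bij_betw_def zeta_power)
  then show ?thesis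
    using assms by (auto simp: power_add dest: inj_onD)
qed

lemma sum_zeta_power_orthogonal:
  assumes "0 < m"
  shows "(\<Sum>j<m. (zeta m ^ j) ^ u * (inverse (zeta m) ^ j) ^ v)
    = (if zeta m ^ u = zeta m ^ v then of_nat m else 0)"
proof -
  define w where "w = zeta m ^ u / zeta m ^ v"
  have terms: "(zeta m ^ j) ^ u * (inverse (zeta m) ^ j) ^ v = w ^ j" for j
    by (simp add: w_def power_mult_distrib power_divide flip: power_mult)
       (simp add: mult.commute divide_inverse power_inverse)
  have "w ^ m = (zeta m ^ m) ^ u / (zeta m ^ m) ^ v"
    by (simp add: w_def power_divide flip: power_mult) (simp add: mult.commute)
  then have "w ^ m = 1"
    using assms by (simp add: zeta_power_m)
  show ?thesis
  proof (cases "zeta m ^ u = zeta m ^ v")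
    case True
    then have "w = 1"
      by (simp add: w_def)
    with True show ?thesis
      by (simp add: terms)
  next
    case False
    then have "w \<noteq> 1"
      by (simp add: w_def)
    with False \<open>w ^ m = 1\<close> show ?thesis
      by (simp add: terms geometric_sum)
  qed
qed

definition mirror_form :: "nat \<Rightarrow> nat \<Rightarrow> bipoly" where
  "mirror_form m j = Zv + cst (zeta m ^ j) * Zbv"

text \<open>The quotient (z^m - w^m) / (z - w) at w = - zeta^j zb.\<close>

definition mirror_cofactor :: "nat \<Rightarrow> nat \<Rightarrow> bipoly" where
  "mirror_cofactor m j = (\<Sum>i<m. bimonom ((- (zeta m ^ j)) ^ i) (m - 1 - i) i)"

definition mirror_prod :: "nat \<Rightarrow> bipoly" where
  "mirror_prod m = Zv ^ m - (- Zbv) ^ m"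

lemma mirror_form_mult_cofactor:
  assumes "0 < m"
  shows "mirror_form m j * mirror_cofactor m j = mirror_prod m"
proof -
  define Y where "Y = cst (- (zeta m ^ j)) * Zbv"
  have "(zeta m ^ j) ^ m = (zeta m ^ m) ^ j"
    by (simp only: mult.commute flip: power_mult)
  then have "(- (zeta m ^ j)) ^ m = (- 1) ^ m"
    using assms by (simp add: power_minus [of "zeta m ^ j"] zeta_power_m)
  moreover have "Y ^ m = cst ((- (zeta m ^ j)) ^ m) * Zbv ^ m"
    by (simp only: Y_def power_mult_distrib cst_power)
  ultimately have "Y ^ m = (- Zbv) ^ m"
    by (simp add: power_minus [of Zbv] cst_power cst_uminus)
  then have "mirror_prod m = - (Y ^ m - Zv ^ m)"
    by (simp add: mirror_prod_def)
  also have "\<dots> = - ((Y - Zv) * (\<Sum>i<m. Zv ^ (m - Suc i) * Y ^ i))"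
    by (simp only: power_diff_sumr2)
  also have "\<dots> = (Zv - Y) * (\<Sum>i<m. Zv ^ (m - Suc i) * Y ^ i)"
    by (simp only: minus_mult_left minus_diff_eq)
  also have "Zv - Y = mirror_form m j"
    by (simp add: Y_def mirror_form_def cst_uminus)
  also have "(\<Sum>i<m. Zv ^ (m - Suc i) * Y ^ i) = mirror_cofactor m j"
    unfolding mirror_cofactor_def
    by (intro sum.cong refl) (simp add: Y_def bimonom_def power_mult_distrib cst_power mult_ac)
  finally show ?thesis
    by simp
qed

lemma mirror_form_nonzero: "mirror_form m j \<noteq> 0"
proof
  assume "mirror_form m j = 0"
  then have "coeff (mirror_form m j) 1 = 0"
    by simp
  then show False
    by (simp add: mirror_form_def Zv_def Zbv_def cst_def)
qed

lemma mirror_prod_nonzero: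
  assumes "0 < m"
  shows "mirror_prod m \<noteq> 0"
proof -
  have "coeff (mirror_prod m) 0 = [:0, 1:] ^ m"
    using assms by (simp add: mirror_prod_def coeff_0_power Zv_def Zbv_def)
  then show ?thesis
    by auto
qed

lemma mirror_form_dvd_bimonom:
  "mirror_form m j dvd bimonom g a b - refl_s m j (bimonom g a b)"
proof -
  define X where "X = cst (- (zeta m ^ j)) * Zbv"
  define Y where "Y = cst (- (inverse (zeta m) ^ j)) * Zv"
  have "Zv ^ a - X ^ a = (Zv - X) * (\<Sum>i<a. X ^ (a - Suc i) * Zv ^ i)"
    by (rule power_diff_sumr2)
  also have "Zv - X = mirror_form m j"
    by (simp add: X_def mirror_form_def cst_uminus)
  finally have dvd_X: "mirror_form m j dvd Zv ^ a - X ^ a"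
    by simp
  have "Zbv ^ b - Y ^ b = (Zbv - Y) * (\<Sum>i<b. Y ^ (b - Suc i) * Zbv ^ i)"
    by (rule power_diff_sumr2)
  also have "Zbv - Y = mirror_form m j * cst (inverse (zeta m ^ j))"
    by (simp add: Y_def mirror_form_def cst_uminus algebra_simps power_inverse flip: cst_mult)
  finally have dvd_Y: "mirror_form m j dvd Zbv ^ b - Y ^ b"
    by (simp add: mult.assoc)
  have "refl_s m j (bimonom g a b) = cst g * X ^ a * Y ^ b"
    unfolding refl_s_def eval2_bimonom X_def Y_def ..
  then have "bimonom g a b - refl_s m j (bimonom g a b)
      = cst g * ((Zv ^ a - X ^ a) * Zbv ^ b + X ^ a * (Zbv ^ b - Y ^ b))"
    by (simp add: bimonom_def algebra_simps)
  then show ?thesis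
    using dvd_X dvd_Y by (simp add: dvd_add dvd_mult dvd_mult2)
qed

lemma mirror_form_dvd: "mirror_form m j dvd q - refl_s m j q"
proof (induct q rule: bipoly_induct)
  case zero
  show ?case
    by simp
next
  case (add p q)
  have "p + q - refl_s m j (p + q) = (p - refl_s m j p) + (q - refl_s m j q)"
    by (simp add: refl_s_add)
  with add show ?case
    by (metis dvd_add)
next
  case (bimonom g a b)
  show ?case
    by (rule mirror_form_dvd_bimonom)
qed

text \<open>The divided-difference part of Y (for e = 0) and of Ybar (for e = 1) multiplied by
  mirror_prod m; the denominator zb + zeta^(-j) z of Ybar is zeta^(-j) times the mirror form.\<close>

definition dunkl_sum :: "nat \<Rightarrow> nat \<Rightarrow> bipoly \<Rightarrow> bipoly" where
  "dunkl_sum m e q = (\<Sum>j<m. cst ((zeta m ^ j) ^ e) * mirror_cofactor m j * (q - refl_s m j q))"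

lemma dunkl_sum_add: "dunkl_sum m e (p + q) = dunkl_sum m e p + dunkl_sum m e q"
  unfolding dunkl_sum_def sum.distrib [symmetric]
  by (rule sum.cong) (simp_all add: refl_s_add algebra_simps)

lemma dunkl_sum_cst_mult: "dunkl_sum m e (cst g * q) = cst g * dunkl_sum m e q"
  unfolding dunkl_sum_def sum_distrib_left refl_s_cst_mult
  by (rule sum.cong) (simp_all add: algebra_simps)

lemma dunkl_sum_sum: "dunkl_sum m e (sum f A) = (\<Sum>k\<in>A. dunkl_sum m e (f k))"
  unfolding dunkl_sum_def refl_s_sum sum_subtractf [symmetric] sum_distrib_left
  by (rule sum.swap)

lemma dunkl_sum_zero [simp]: "dunkl_sum m e 0 = 0"
  by (simp add: dunkl_sum_def)

lemma mirror_prod_mult_quotient: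
  assumes "0 < m" and "u \<noteq> 0"
  shows "mirror_prod m * ((q - refl_s m j q) div (cst u * mirror_form m j))
    = cst (inverse u) * mirror_cofactor m j * (q - refl_s m j q)"
proof -
  obtain t where t: "q - refl_s m j q = mirror_form m j * t"
    using mirror_form_dvd [of m j q] unfolding dvd_def by blast
  have "cst u * cst (inverse u) = 1"
    using assms(2) by (simp flip: cst_mult)
  then have "q - refl_s m j q = (cst u * mirror_form m j) * (cst (inverse u) * t)"
    by (simp add: t algebra_simps)
  moreover have "cst u * mirror_form m j \<noteq> 0"
    using assms(2) mirror_form_nonzero by (simp add: cst_def)
  ultimately have "(q - refl_s m j q) div (cst u * mirror_form m j) = cst (inverse u) * t"
    by simp
  then show ?thesis
    using mirror_form_mult_cofactor [OF assms(1), of j] by (simp add: t algebra_simps)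
qed

lemma dunklY_eqI:
  assumes "0 < m" and "dunkl_sum m 0 q = mirror_prod m * t"
  shows "dunklY m c q = dz q - cst c * t"
proof -
  have "mirror_prod m * (\<Sum>j<m. (q - refl_s m j q) div mirror_form m j) = mirror_prod m * t"
    using mirror_prod_mult_quotient [OF assms(1), of 1] assms(2)
    by (simp add: dunkl_sum_def sum_distrib_left)
  then have "(\<Sum>j<m. (q - refl_s m j q) div mirror_form m j) = t"
    using mirror_prod_nonzero [OF assms(1)] by simp
  then show ?thesis
    by (simp add: dunklY_def mirror_form_def)
qed

lemma dunklYb_eqI:
  assumes "0 < m" and "dunkl_sum m 1 q = mirror_prod m * t"
  shows "dunklYb m c q = dzb q - cst c * t"
proof -
  have mirror: "Zbv + cst (inverse (zeta m) ^ j) * Zv = cst (inverse (zeta m ^ j)) * mirror_form m j"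
    for j by (simp add: mirror_form_def algebra_simps power_inverse flip: cst_mult)
  have "mirror_prod m * (\<Sum>j<m. (q - refl_s m j q) div (Zbv + cst (inverse (zeta m) ^ j) * Zv))
      = mirror_prod m * t"
    using mirror_prod_mult_quotient [OF assms(1)] assms(2)
    by (simp add: dunkl_sum_def sum_distrib_left mirror)
  then have "(\<Sum>j<m. (q - refl_s m j q) div (Zbv + cst (inverse (zeta m) ^ j) * Zv)) = t"
    using mirror_prod_nonzero [OF assms(1)] by simp
  then show ?thesis
    by (simp add: dunklYb_def)
qed

lemma mirror_prod_mult_geometric:
  "mirror_prod m * (\<Sum>k<L. bimonom ((-1) ^ (m * k)) (a + m * (L - 1 - k)) (b + m * k))
    = bimonom 1 (a + m * L) b - bimonom ((-1) ^ (m * L)) a (b + m * L)"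
proof -
  define u v where "u = Zv ^ m" and "v = (- Zbv) ^ m"
  have u_power: "u ^ k = Zv ^ (m * k)" and v_power: "v ^ k = cst ((-1) ^ (m * k)) * Zbv ^ (m * k)"
    for k unfolding u_def v_def power_mult [symmetric]
    by (simp_all add: cst_power cst_uminus power_minus [of Zbv])
  have "(u - v) * (\<Sum>k<L. u ^ (L - Suc k) * v ^ k) = - ((v - u) * (\<Sum>k<L. u ^ (L - Suc k) * v ^ k))"
    by (simp only: minus_mult_left minus_diff_eq)
  also have "\<dots> = u ^ L - v ^ L"
    by (simp only: power_diff_sumr2 [symmetric] minus_diff_eq)
  finally have geometric: "(u - v) * (\<Sum>k<L. u ^ (L - Suc k) * v ^ k) = u ^ L - v ^ L" .
  have "bimonom ((-1) ^ (m * k)) (a + m * (L - 1 - k)) (b + m * k)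
      = bimonom 1 a b * (u ^ (L - Suc k) * v ^ k)" for k
    by (simp add: u_power v_power bimonom_def power_add mult_ac)
  then have "mirror_prod m * (\<Sum>k<L. bimonom ((-1) ^ (m * k)) (a + m * (L - 1 - k)) (b + m * k))
      = bimonom 1 a b * ((u - v) * (\<Sum>k<L. u ^ (L - Suc k) * v ^ k))"
    by (simp add: mirror_prod_def sum_distrib_left mult_ac flip: u_def v_def)
  also have "\<dots> = bimonom 1 a b * (u ^ L - v ^ L)"
    by (simp only: geometric)
  finally show ?thesis
    by (simp add: u_power v_power bimonom_def power_add algebra_simps)
qed

lemma dunkl_summand_bimonom:
  "cst ((zeta m ^ j) ^ e) * mirror_cofactor m j * (bimonom g a b - refl_s m j (bimonom g a b))
    = (\<Sum>k<m. bimonom (g * (-1) ^ k * (zeta m ^ j) ^ (e + k)) (m - 1 - k + a) (k + b)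
        - bimonom (g * (-1) ^ (k + a + b) * ((zeta m ^ j) ^ (e + k + a) * (inverse (zeta m) ^ j) ^ b))
            (m - 1 - k + b) (k + a))"
proof -
  have coefficients: "(zeta m ^ j) ^ e * (- (zeta m ^ j)) ^ k * g = g * (-1) ^ k * (zeta m ^ j) ^ (e + k)"
    "(zeta m ^ j) ^ e * (- (zeta m ^ j)) ^ k * (g * (- (zeta m ^ j)) ^ a * (- (inverse (zeta m) ^ j)) ^ b)
      = g * (-1) ^ (k + a + b) * ((zeta m ^ j) ^ (e + k + a) * (inverse (zeta m) ^ j) ^ b)"
    for k
    unfolding power_minus [of "zeta m ^ j"] power_minus [of "inverse (zeta m) ^ j"]
    by (simp_all add: power_add mult_ac)
  show ?thesis
    unfolding mirror_cofactor_def refl_s_bimonom sum_distrib_left sum_distrib_right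
    by (intro sum.cong refl) (simp only: right_diff_distrib cst_mult_bimonom bimonom_mult coefficients)
qed

text \<open>Only the terms i and i' of the cofactor survive the sum over j.\<close>

lemma dunkl_sum_bimonom:
  assumes "0 < m"
    and "i < m" and "zeta m ^ (e + i) = 1"
    and "i' < m" and "zeta m ^ (e + i' + a) = zeta m ^ b"
  shows "dunkl_sum m e (bimonom g a b) = cst (of_nat m) *
    (bimonom (g * (-1) ^ i) (m - 1 - i + a) (i + b)
     - bimonom (g * (-1) ^ (i' + a + b)) (m - 1 - i' + b) (i' + a))"
proof -
  have coefficient_sum:
    "(\<Sum>j<m. g * (-1) ^ k * (zeta m ^ j) ^ (e + k))
      = (if k = i then g * (-1) ^ k * of_nat m else 0)"
    "(\<Sum>j<m. g * (-1) ^ (k + a + b) * ((zeta m ^ j) ^ (e + k + a) * (inverse (zeta m) ^ j) ^ b))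
      = (if k = i' then g * (-1) ^ (k + a + b) * of_nat m else 0)"
    if "k < m" for k
  proof -
    have "zeta m ^ (e + k) = zeta m ^ 0 \<longleftrightarrow> k = i"
      using zeta_power_cancel [OF assms(1) that assms(2), of e] assms(3) by simp
    then show "(\<Sum>j<m. g * (-1) ^ k * (zeta m ^ j) ^ (e + k))
        = (if k = i then g * (-1) ^ k * of_nat m else 0)"
      using sum_zeta_power_orthogonal [OF assms(1), of "e + k" 0]
      unfolding sum_distrib_left [symmetric] by simp
    have "zeta m ^ (e + k + a) = zeta m ^ b \<longleftrightarrow> k = i'"
      using zeta_power_cancel [OF assms(1) that assms(4), of "e + a"] assms(5) by (simp add: ac_simps)
    then show "(\<Sum>j<m. g * (-1) ^ (k + a + b) * ((zeta m ^ j) ^ (e + k + a) * (inverse (zeta m) ^ j) ^ b))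
        = (if k = i' then g * (-1) ^ (k + a + b) * of_nat m else 0)"
      unfolding sum_distrib_left [symmetric] sum_zeta_power_orthogonal [OF assms(1)] by simp
  qed
  have "dunkl_sum m e (bimonom g a b)
      = (\<Sum>k<m. bimonom (\<Sum>j<m. g * (-1) ^ k * (zeta m ^ j) ^ (e + k)) (m - 1 - k + a) (k + b))
        - (\<Sum>k<m. bimonom (\<Sum>j<m. g * (-1) ^ (k + a + b) * ((zeta m ^ j) ^ (e + k + a) * (inverse (zeta m) ^ j) ^ b))
            (m - 1 - k + b) (k + a))"
    unfolding dunkl_sum_def dunkl_summand_bimonom by (subst sum.swap) (simp add: sum_subtractf sum_bimonom)
  also have "\<dots> = (\<Sum>k<m. if k = i then bimonom (g * (-1) ^ k * of_nat m) (m - 1 - k + a) (k + b) else 0)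
        - (\<Sum>k<m. if k = i' then bimonom (g * (-1) ^ (k + a + b) * of_nat m) (m - 1 - k + b) (k + a) else 0)"
    by (intro arg_cong2 [where f = minus] sum.cong) (simp_all add: coefficient_sum)
  finally show ?thesis
    using assms(2,4) by (simp add: cst_mult_bimonom right_diff_distrib mult_ac)
qed

lemma dunkl_sum_0_bimonom_residue:
  assumes "0 < m" and "a = b + 1 + r + m * N" and "r < m"
  shows "dunkl_sum m 0 (bimonom g a b) = cst (of_nat m * g) *
    (bimonom 1 (b + r + m * Suc N) b - bimonom ((-1) ^ (m * Suc N)) (b + r) (b + m * Suc N))"
proof -
  have exponents: "m - 1 - 0 + a = b + r + m * Suc N" "0 + b = b"
    "m - 1 - (m - 1 - r) + b = b + r" "m - 1 - r + a = b + m * Suc N"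
    using assms(2,3) by simp_all
  have "m - 1 - r + a + b = m * Suc N + 2 * b"
    using assms(2,3) by simp
  then have sign: "(-1) ^ (m - 1 - r + a + b) = ((-1) ^ (m * Suc N) :: complex)"
    by (simp add: power_add)
  have "0 + (m - 1 - r) + a = b + m * Suc N"
    using assms(2,3) by simp
  then have "zeta m ^ (0 + (m - 1 - r) + a) = zeta m ^ b"
    by (simp only: zeta_power_add_mult [OF assms(1)])
  then have "dunkl_sum m 0 (bimonom g a b) = cst (of_nat m) *
      (bimonom (g * (-1) ^ 0) (m - 1 - 0 + a) (0 + b)
       - bimonom (g * (-1) ^ (m - 1 - r + a + b)) (m - 1 - (m - 1 - r) + b) (m - 1 - r + a))"
    using assms(1,3) by (intro dunkl_sum_bimonom) (simp_all add: zeta_power_m)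
  then show ?thesis
    by (simp only: sign, simp only: exponents, simp add: right_diff_distrib cst_mult_bimonom mult_ac)
qed

lemma dunkl_sum_0_bimonom:
  assumes "0 < m" and "b < a"
  shows "dunkl_sum m 0 (bimonom g a b) = mirror_prod m *
    (cst (of_nat m) * (\<Sum>k\<le>(a - b - 1) div m. bimonom (g * (-1) ^ (m * k)) (a - 1 - m * k) (b + m * k)))"
proof -
  define N r where "N = (a - b - 1) div m" and "r = (a - b - 1) mod m"
  have r: "r < m"
    using assms(1) by (simp add: r_def)
  have a: "a = b + 1 + r + m * N"
    using assms(2) div_mult_mod_eq [of "a - b - 1" m] by (simp add: N_def r_def)
  have "dunkl_sum m 0 (bimonom g a b) = cst (of_nat m * g) *
      (bimonom 1 (b + r + m * Suc N) b - bimonom ((-1) ^ (m * Suc N)) (b + r) (b + m * Suc N))"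
    by (rule dunkl_sum_0_bimonom_residue [OF assms(1) a r])
  also have "\<dots> = cst (of_nat m * g) * (mirror_prod m *
      (\<Sum>k<Suc N. bimonom ((-1) ^ (m * k)) (b + r + m * (Suc N - 1 - k)) (b + m * k)))"
    by (simp only: mirror_prod_mult_geometric)
  also have "(\<Sum>k<Suc N. bimonom ((-1) ^ (m * k)) (b + r + m * (Suc N - 1 - k)) (b + m * k))
      = (\<Sum>k\<le>N. bimonom ((-1) ^ (m * k)) (a - 1 - m * k) (b + m * k))"
    unfolding lessThan_Suc_atMost
  proof (rule sum.cong [OF refl])
    fix k
    assume "k \<in> {..N}"
    then have "a - 1 - m * k = b + r + m * (Suc N - 1 - k)"
      by (simp add: a diff_mult_distrib2)
    then show "bimonom ((-1) ^ (m * k)) (b + r + m * (Suc N - 1 - k)) (b + m * k)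
        = bimonom ((-1) ^ (m * k)) (a - 1 - m * k) (b + m * k)"
      by simp
  qed
  finally show ?thesis
    by (simp add: N_def sum_distrib_left cst_mult_bimonom mult_ac)
qed

lemma dunkl_sum_1_bimonom_residue:
  assumes "0 < m" and "a = b + r + m * N" and "r < m"
  shows "dunkl_sum m 1 (bimonom g a b) = - cst (of_nat m * g * (-1) ^ m) *
    (bimonom 1 (b + r + m * N) (b + m - 1) - bimonom ((-1) ^ (m * N)) (b + r) (b + m - 1 + m * N))"
proof -
  have exponents: "m - 1 - (m - 1) + a = b + r + m * N" "m - 1 + b = b + m - 1"
    "m - 1 - (m - 1 - r) + b = b + r" "m - 1 - r + a = b + m - 1 + m * N"
    using assms(2,3) by simp_all
  have sign_pred: "(-1) ^ (m - 1) = - ((-1) ^ m :: complex)"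
    using assms(1) by (cases m) simp_all
  have "m - 1 - r + a + b = (m - 1) + m * N + 2 * b"
    using assms(2,3) by simp
  then have "(-1) ^ (m - 1 - r + a + b) = ((-1) ^ ((m - 1) + m * N + 2 * b) :: complex)"
    by (rule arg_cong)
  also have "\<dots> = - ((-1) ^ m * (-1) ^ (m * N))"
    by (simp only: power_add sign_pred) simp
  finally have sign: "(-1) ^ (m - 1 - r + a + b) = - ((-1) ^ m * (-1) ^ (m * N) :: complex)" .
  have "1 + (m - 1 - r) + a = b + m * Suc N"
    using assms(2,3) by simp
  then have "zeta m ^ (1 + (m - 1 - r) + a) = zeta m ^ b"
    by (simp only: zeta_power_add_mult [OF assms(1)])
  then have "dunkl_sum m 1 (bimonom g a b) = cst (of_nat m) *
      (bimonom (g * (-1) ^ (m - 1)) (m - 1 - (m - 1) + a) (m - 1 + b)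
       - bimonom (g * (-1) ^ (m - 1 - r + a + b)) (m - 1 - (m - 1 - r) + b) (m - 1 - r + a))"
    using assms(1,3) by (intro dunkl_sum_bimonom) (simp_all add: zeta_power_m)
  then show ?thesis
    by (simp only: sign sign_pred, simp only: exponents,
        simp add: right_diff_distrib cst_mult_bimonom cst_uminus mult_ac flip: bimonom_uminus)
qed

lemma dunkl_sum_1_bimonom:
  assumes "0 < m" and "b \<le> a"
  shows "dunkl_sum m 1 (bimonom g a b) = mirror_prod m *
    - (cst (of_nat m) * (\<Sum>k\<in>{1..(a - b) div m}. bimonom (g * (-1) ^ (m * k)) (a - m * k) (b + m * k - 1)))"
proof -
  define N r where "N = (a - b) div m" and "r = (a - b) mod m"
  have r: "r < m"
    using assms(1) by (simp add: r_def)
  have a: "a = b + r + m * N"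
    using assms(2) div_mult_mod_eq [of "a - b" m] by (simp add: N_def r_def)
  have shift: "(\<Sum>k\<in>{1..N}. F k) = (\<Sum>k<N. F (Suc k))" for F :: "nat \<Rightarrow> bipoly"
    using sum.atLeast1_atMost_eq [of F N] by simp
  have "dunkl_sum m 1 (bimonom g a b) = - cst (of_nat m * g * (-1) ^ m) *
      (bimonom 1 (b + r + m * N) (b + m - 1) - bimonom ((-1) ^ (m * N)) (b + r) (b + m - 1 + m * N))"
    by (rule dunkl_sum_1_bimonom_residue [OF assms(1) a r])
  also have "\<dots> = - cst (of_nat m * g * (-1) ^ m) * (mirror_prod m *
      (\<Sum>k<N. bimonom ((-1) ^ (m * k)) (b + r + m * (N - 1 - k)) (b + m - 1 + m * k)))"
    by (simp only: mirror_prod_mult_geometric)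
  also have "\<dots> = mirror_prod m * - (cst (of_nat m) * (cst (g * (-1) ^ m) *
      (\<Sum>k<N. bimonom ((-1) ^ (m * k)) (b + r + m * (N - 1 - k)) (b + m - 1 + m * k))))"
    by (simp only: cst_mult mult_minus_left mult_minus_right mult_ac)
  also have "cst (g * (-1) ^ m) * (\<Sum>k<N. bimonom ((-1) ^ (m * k)) (b + r + m * (N - 1 - k)) (b + m - 1 + m * k))
      = (\<Sum>k\<in>{1..N}. bimonom (g * (-1) ^ (m * k)) (a - m * k) (b + m * k - 1))"
    unfolding shift sum_distrib_left
  proof (rule sum.cong [OF refl])
    fix k
    assume "k \<in> {..<N}"
    then have "m * Suc k \<le> m * N"
      by (intro mult_le_mono2) simp
    moreover have "m * (N - 1 - k) = m * N - m * Suc k"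
      by (simp add: diff_mult_distrib2)
    ultimately have "a - m * Suc k = b + r + m * (N - 1 - k)"
      using a by linarith
    moreover have "b + m * Suc k - 1 = b + m - 1 + m * k"
      using assms(1) by simp
    ultimately show "cst (g * (-1) ^ m) * bimonom ((-1) ^ (m * k)) (b + r + m * (N - 1 - k)) (b + m - 1 + m * k)
        = bimonom (g * (-1) ^ (m * Suc k)) (a - m * Suc k) (b + m * Suc k - 1)"
      by (simp only:) (simp add: cst_mult_bimonom power_add mult_ac)
  qed
  finally show ?thesis
    by (simp only: N_def)
qed

lemma dunkl_sum_0_alternating_term:
  assumes "0 < m" and a: "a = b + r + m * N" and "r < m" and k: "k \<in> {1..N}"
  shows "dunkl_sum m 0 (bimonom ((-1) ^ (m * k)) (a - m * k) (b + m * k - 1)) = cst (of_nat m) *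
    (bimonom ((-1) ^ (m * k)) (b + r + m * (N + 1 - k) - 1) (b + m * k - 1)
     - bimonom ((-1) ^ (m * (N + 1 - k))) (b + r + m * k - 1) (b + m * (N + 1 - k) - 1))"
proof -
  have mk: "m \<le> m * k" "m * k \<le> m * N"
    using k by simp_all
  have products: "m * (N + 1 - k) = m * N + m - m * k" "m * (N - k) = m * N - m * k"
    "m * (k - 1) = m * k - m"
    using k by (simp_all add: diff_mult_distrib2)
  note linear = a \<open>r < m\<close> mk \<open>0 < m\<close>
  have exponents: "m - 1 - 0 + (a - m * k) = b + r + m * (N + 1 - k) - 1"
    "0 + (b + m * k - 1) = b + m * k - 1"
    "m - 1 - (m - 1 - r) + (b + m * k - 1) = b + r + m * k - 1"
    "m - 1 - r + (a - m * k) = b + m * (N + 1 - k) - 1"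
    using linear unfolding products by linarith+
  have "m * k + (m - 1 - r + (a - m * k) + (b + m * k - 1)) = m * (N + 1 - k) + 2 * (m * k + b - 1)"
    using linear unfolding products by linarith
  then have "(-1) ^ (m * k) * (-1) ^ (m - 1 - r + (a - m * k) + (b + m * k - 1))
      = ((-1) ^ (m * (N + 1 - k) + 2 * (m * k + b - 1)) :: complex)"
    by (simp only: power_add [symmetric])
  then have sign: "(-1) ^ (m * k) * (-1) ^ (m - 1 - r + (a - m * k) + (b + m * k - 1))
      = ((-1) ^ (m * (N + 1 - k)) :: complex)"
    by (simp add: power_add)
  have "0 + (m - 1 - r) + (a - m * k) = (b + m - 1) + m * (N - k)"
    and "b + m * k - 1 = (b + m - 1) + m * (k - 1)"
    using linear unfolding products by linarith+
  then have "zeta m ^ (0 + (m - 1 - r) + (a - m * k)) = zeta m ^ (b + m * k - 1)"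
    by (simp only: zeta_power_add_mult [OF assms(1)])
  then have "dunkl_sum m 0 (bimonom ((-1) ^ (m * k)) (a - m * k) (b + m * k - 1)) = cst (of_nat m) *
      (bimonom ((-1) ^ (m * k) * (-1) ^ 0) (m - 1 - 0 + (a - m * k)) (0 + (b + m * k - 1))
       - bimonom ((-1) ^ (m * k) * (-1) ^ (m - 1 - r + (a - m * k) + (b + m * k - 1)))
           (m - 1 - (m - 1 - r) + (b + m * k - 1)) (m - 1 - r + (a - m * k)))"
    using assms(1,3) by (intro dunkl_sum_bimonom) (simp_all add: zeta_power_m)
  then show ?thesis
    by (simp only: sign, simp only: exponents, simp)
qed

lemma dunkl_sum_0_alternating_sum:
  assumes "0 < m" and "b \<le> a"
  shows "dunkl_sum m 0 (\<Sum>k\<in>{1..(a - b) div m}. bimonom ((-1) ^ (m * k)) (a - m * k) (b + m * k - 1)) = 0"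
proof -
  define N r where "N = (a - b) div m" and "r = (a - b) mod m"
  have r: "r < m"
    using assms(1) by (simp add: r_def)
  have a: "a = b + r + m * N"
    using assms(2) div_mult_mod_eq [of "a - b" m] by (simp add: N_def r_def)
  define X where "X k = bimonom ((-1) ^ (m * k)) (b + r + m * (N + 1 - k) - 1) (b + m * k - 1)" for k
  have summand: "dunkl_sum m 0 (bimonom ((-1) ^ (m * k)) (a - m * k) (b + m * k - 1))
      = cst (of_nat m) * (X k - X (N + 1 - k))" if k: "k \<in> {1..N}" for k
  proof -
    have "N + 1 - (N + 1 - k) = k"
      using k by simp
    then show ?thesis
      by (simp only: X_def dunkl_sum_0_alternating_term [OF assms(1) a r k])
  qed
  have "dunkl_sum m 0 (\<Sum>k\<in>{1..N}. bimonom ((-1) ^ (m * k)) (a - m * k) (b + m * k - 1))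
      = (\<Sum>k\<in>{1..N}. cst (of_nat m) * (X k - X (N + 1 - k)))"
    unfolding dunkl_sum_sum by (intro sum.cong refl summand)
  also have "\<dots> = cst (of_nat m) * ((\<Sum>k\<in>{1..N}. X k) - (\<Sum>k\<in>{1..N}. X (N + 1 - k)))"
    by (simp only: sum_distrib_left [symmetric] sum_subtractf)
  also have "(\<Sum>k\<in>{1..N}. X (N + 1 - k)) = (\<Sum>k\<in>{1..N}. X k)"
    using sum.atLeastAtMost_rev [of X 1 N] by simp
  finally show ?thesis
    by (simp add: N_def)
qed

lemma dunklYb_bimonom:
  assumes "0 < m" and "b \<le> a"
  shows "dunklYb m c (bimonom g a b) = bimonom (of_nat b * g) a (b - 1)
    + cst (of_nat m * c) * (\<Sum>k\<in>{1..(a - b) div m}. bimonom (g * (-1) ^ (m * k)) (a - m * k) (b + m * k - 1))"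
  using dunklYb_eqI [OF assms(1) dunkl_sum_1_bimonom [OF assms]]
  by (simp add: dzb_bimonom cst_mult mult_ac)

lemma dunkl_sum_0_dunklYb_bimonom:
  assumes "0 < m" and "b \<le> a"
  shows "dunkl_sum m 0 (dunklYb m c (bimonom 1 a b)) = mirror_prod m * (cst (of_nat m) *
    (\<Sum>k\<le>(a - b) div m. bimonom (of_nat b * (-1) ^ (m * k)) (a - m * k - 1) (b + m * k - 1)))"
proof -
  have "dunkl_sum m 0 (dunklYb m c (bimonom 1 a b)) = dunkl_sum m 0 (bimonom (of_nat b) a (b - 1))"
    unfolding dunklYb_bimonom [OF assms] mult_1_left mult_1_right dunkl_sum_add dunkl_sum_cst_mult
      dunkl_sum_0_alternating_sum [OF assms]
    by simp
  also have "\<dots> = mirror_prod m * (cst (of_nat m) *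
      (\<Sum>k\<le>(a - b) div m. bimonom (of_nat b * (-1) ^ (m * k)) (a - m * k - 1) (b + m * k - 1)))"
  proof (cases "b = 0")
    case True
    then show ?thesis
      by simp
  next
    case False
    then have "(\<Sum>k\<le>(a - (b - 1) - 1) div m. bimonom (of_nat b * (-1) ^ (m * k)) (a - 1 - m * k) (b - 1 + m * k))
        = (\<Sum>k\<le>(a - b) div m. bimonom (of_nat b * (-1) ^ (m * k)) (a - m * k - 1) (b + m * k - 1))"
      by (intro sum.cong) simp_all
    with False show ?thesis
      using assms dunkl_sum_0_bimonom [OF assms(1), of "b - 1" a "of_nat b"] by simp
  qed
  finally show ?thesis .
qed

lemma dunklY_dunklYb_bimonom:
  assumes "0 < m" and "b \<le> a"
  shows "dunklY m c (dunklYb m c (bimonom 1 a b)) =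
    bimonom ((of_nat a - of_nat m * c) * of_nat b) (a - 1) (b - 1)
    + cst (of_nat m * c) * (\<Sum>k\<in>{1..(a - b) div m}.
        bimonom ((-1) ^ (m * k) * of_nat (a - b - m * k)) (a - m * k - 1) (b + m * k - 1))"
proof -
  define N where "N = (a - b) div m"
  define X where "X g k = bimonom g (a - m * k - 1) (b + m * k - 1)" for g k
  have coefficient: "X (of_nat (a - m * k) * (-1) ^ (m * k)) k
      = X ((-1) ^ (m * k) * of_nat (a - b - m * k)) k + X (of_nat b * (-1) ^ (m * k)) k"
    if "k \<in> {1..N}" for k
  proof -
    have "m * k \<le> a - b"
      using that less_eq_div_iff_mult_less_eq [OF assms(1), of k "a - b"] by (simp add: N_def mult.commute)
    then have "a - m * k = (a - b - m * k) + b"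
      using assms(2) by linarith
    then show ?thesis
      by (simp add: X_def bimonom_add algebra_simps)
  qed
  have "dunklY m c (dunklYb m c (bimonom 1 a b))
      = dz (dunklYb m c (bimonom 1 a b)) - cst (of_nat m * c) * (\<Sum>k\<le>N. X (of_nat b * (-1) ^ (m * k)) k)"
    using dunklY_eqI [OF assms(1) dunkl_sum_0_dunklYb_bimonom [OF assms]]
    by (simp add: N_def X_def cst_mult mult.assoc)
  also have "dz (dunklYb m c (bimonom 1 a b)) = X (of_nat a * of_nat b) 0
      + cst (of_nat m * c) * (\<Sum>k\<in>{1..N}. X (of_nat (a - m * k) * (-1) ^ (m * k)) k)"
    by (simp add: dunklYb_bimonom [OF assms] dz_add dz_cst_mult dz_sum dz_bimonom N_def X_def)
  also have "(\<Sum>k\<in>{1..N}. X (of_nat (a - m * k) * (-1) ^ (m * k)) k)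
      = (\<Sum>k\<in>{1..N}. X ((-1) ^ (m * k) * of_nat (a - b - m * k)) k)
        + (\<Sum>k\<in>{1..N}. X (of_nat b * (-1) ^ (m * k)) k)"
    by (simp add: coefficient sum.distrib)
  also have "(\<Sum>k\<le>N. X (of_nat b * (-1) ^ (m * k)) k)
      = X (of_nat b) 0 + (\<Sum>k\<in>{1..N}. X (of_nat b * (-1) ^ (m * k)) k)"
    by (simp add: atMost_atLeast0 sum.atLeast_Suc_atMost)
  also have "X (of_nat a * of_nat b) 0 + cst (of_nat m * c) * (S + S') - cst (of_nat m * c) * (X (of_nat b) 0 + S')
      = (X (of_nat a * of_nat b) 0 - cst (of_nat m * c) * X (of_nat b) 0) + cst (of_nat m * c) * S" for S S'
    by (simp add: algebra_simps)
  also have "X (of_nat a * of_nat b) 0 - cst (of_nat m * c) * X (of_nat b) 0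
      = X ((of_nat a - of_nat m * c) * of_nat b) 0"
    by (simp add: X_def cst_mult_bimonom bimonom_diff algebra_simps)
  finally show ?thesis
    by (simp add: N_def X_def)
qed

theorem proposition2p4:
  fixes m a b :: nat and c :: complex
  assumes "m \<ge> 2" and "a \<ge> b"
  shows "dunklF m c (Zv ^ a * Zbv ^ b) =
    cst ((of_nat m * c - of_nat a) * of_nat b) * Zv ^ (a - 1) * Zbv ^ (b - 1)
    - cst (of_nat m * c) * (\<Sum>k\<in>{1..(a - b) div m}.
        cst ((-1) ^ (m * k) * of_nat (a - b - m * k)) * Zv ^ (a - m * k - 1) * Zbv ^ (b + m * k - 1))"
proof -
  have "0 < m"
    using assms(1) by simp
  then have "dunklF m c (bimonom 1 a b) =
      bimonom ((of_nat m * c - of_nat a) * of_nat b) (a - 1) (b - 1)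
      - cst (of_nat m * c) * (\<Sum>k\<in>{1..(a - b) div m}.
          bimonom ((-1) ^ (m * k) * of_nat (a - b - m * k)) (a - m * k - 1) (b + m * k - 1))"
    using assms(2) by (simp add: dunklF_def dunklY_dunklYb_bimonom bimonom_uminus algebra_simps)
  then show ?thesis
    by (simp add: bimonom_def)
qed

end
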